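(* Let $d\ge 3$ and let $S\subseteq\{0,1\}^d$ be the vertex set of a subcube of $Q_d$ of dimension $d'<d$ (i.e., all strings agreeing with a fixed string on a fixed set of $d-d'$ positions). Then the subgraph of $\mathit{CCC}_d$ induced by $\{[\ell,x] : \ell\in\{0,\dots,d-1\},\ x\in S\}$ is a convex subgraph of $\mathit{CCC}_d$.
   Context: Binary strings $x=x_0x_1\cdots x_{d-1}$ have positions $0,\dots,d-1$ from left to right; $x(i)$ denotes $x$ with the bit at position $i$ complemented. The cube-connected cycle $\mathit{CCC}_d$ ($d\ge 3$) has vertex set $\{[\ell,x]:\ell\in\{0,\dots,d-1\},\ x\in\{0,1\}^d\}$; $[\ell,x]$ and $[\ell',x']$ are adjacent iff either $x=x'$ and $\ell'\equiv \ell\pm 1\pmod d$, or $\ell=\ell'$ and $x'=x(\ell)$. $Q_d$ is the hypercube on $\{0,1\}^d$ (adjacency: differing in exactly one bit). A subgraph $H$ of $G$ is convex if every shortest path in $G$ between two vertices of $H$ lies in $H$. *)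

theory Defs
  imports Main
begin

definition flip_bit :: "bool list \<Rightarrow> nat \<Rightarrow> bool list" where
  "flip_bit x i = x[i := \<not> x ! i]"

definition is_walk :: "'v set \<Rightarrow> ('v \<Rightarrow> 'v \<Rightarrow> bool) \<Rightarrow> 'v list \<Rightarrow> bool" where
  "is_walk V E p \<longleftrightarrow> p \<noteq> [] \<and> set p \<subseteq> V \<and> (\<forall>i. Suc i < length p \<longrightarrow> E (p ! i) (p ! Suc i))"

definition is_shortest_path :: "'v set \<Rightarrow> ('v \<Rightarrow> 'v \<Rightarrow> bool) \<Rightarrow> 'v \<Rightarrow> 'v \<Rightarrow> 'v list \<Rightarrow> bool" where
  "is_shortest_path V E u v p \<longleftrightarrow>
     is_walk V E p \<and> hd p = u \<and> last p = v \<and>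
     (\<forall>q. is_walk V E q \<and> hd q = u \<and> last q = v \<longrightarrow> length p \<le> length q)"

text \<open>The subgraph induced by W is convex: every shortest path in G between two vertices
  of W lies in the induced subgraph, i.e. all its vertices are in W (its edges then
  automatically belong to the induced subgraph).\<close>

definition convex_induced :: "'v set \<Rightarrow> ('v \<Rightarrow> 'v \<Rightarrow> bool) \<Rightarrow> 'v set \<Rightarrow> bool" where
  "convex_induced V E W \<longleftrightarrow> W \<subseteq> V \<and>
     (\<forall>u\<in>W. \<forall>v\<in>W. \<forall>p. is_shortest_path V E u v p \<longrightarrow> set p \<subseteq> W)"

text \<open>Cube-connected cycle CCC_d: vertices [l,x] are pairs (l, x).\<close>

definition ccc_verts :: "nat \<Rightarrow> (nat \<times> bool list) set" where
  "ccc_verts d = {(l, x). l < d \<and> length x = d}"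

definition ccc_adj :: "nat \<Rightarrow> nat \<times> bool list \<Rightarrow> nat \<times> bool list \<Rightarrow> bool" where
  "ccc_adj d u v \<longleftrightarrow> u \<in> ccc_verts d \<and> v \<in> ccc_verts d \<and>
     ((snd u = snd v \<and> (fst v = (fst u + 1) mod d \<or> fst u = (fst v + 1) mod d)) \<or>
      (fst u = fst v \<and> snd v = flip_bit (snd u) (fst u)))"

definition subcube :: "nat \<Rightarrow> nat set \<Rightarrow> bool list \<Rightarrow> bool list set" where
  "subcube d F a = {x. length x = d \<and> (\<forall>i\<in>F. x ! i = a ! i)}"

end

theory Submission imports Defs begin

text \<open>Fix a coordinate i in F and the half-space of vertices whose bit i differs from a.
  An edge of the CCC crossing this half-space must be the hypercube edge at level i, so the
  automorphism complementing bit i swaps its two ends. A shortest path that left the subcube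
  would cross such a half-space twice; reflecting the part between the two crossings yields
  a walk with the same ends that is two vertices shorter.\<close>

lemma is_walk_singleton: "is_walk V E [x] \<longleftrightarrow> x \<in> V"
  by (simp add: is_walk_def)

lemma is_walk_Cons_Cons:
  "is_walk V E (x # y # ys) \<longleftrightarrow> x \<in> V \<and> E x y \<and> is_walk V E (y # ys)"
proof
  assume "is_walk V E (x # y # ys)"
  then show "x \<in> V \<and> E x y \<and> is_walk V E (y # ys)"
    unfolding is_walk_def by (auto dest: spec[where x = 0] spec[where x = "Suc _"])
next
  assume h: "x \<in> V \<and> E x y \<and> is_walk V E (y # ys)"
  show "is_walk V E (x # y # ys)"
    unfolding is_walk_def
  proof (intro conjI allI impI)
    fix i assume "Suc i < length (x # y # ys)"
    then show "E ((x # y # ys) ! i) ((x # y # ys) ! Suc i)"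
      using h by (cases i) (auto simp: is_walk_def)
  qed (use h in \<open>auto simp: is_walk_def\<close>)
qed

lemma is_walk_append_iff:
  assumes "xs \<noteq> []" "ys \<noteq> []"
  shows "is_walk V E (xs @ ys) \<longleftrightarrow> is_walk V E xs \<and> is_walk V E ys \<and> E (last xs) (hd ys)"
  using assms(1)
proof (induction xs rule: list_nonempty_induct)
  case (single x)
  then show ?case
    using assms(2) by (cases ys) (auto simp: is_walk_Cons_Cons is_walk_singleton)
next
  case (cons x xs)
  then show ?case
    by (cases xs) (auto simp: is_walk_Cons_Cons)
qed

lemma is_walk_infix:
  assumes "is_walk V E (xs @ ys @ zs)" "ys \<noteq> []"
  shows "is_walk V E ys"
  unfolding is_walk_def
proof (intro conjI allI impI)
  fix i assume "Suc i < length ys"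
  then show "E (ys ! i) (ys ! Suc i)"
    using assms(1) unfolding is_walk_def
    by (auto dest!: spec[where x = "length xs + i"] simp: nth_append)
qed (use assms in \<open>auto simp: is_walk_def\<close>)

lemma is_walk_map:
  assumes "is_walk V E p" "\<And>w. w \<in> V \<Longrightarrow> f w \<in> V" "\<And>u v. E u v \<Longrightarrow> E (f u) (f v)"
  shows "is_walk V E (map f p)"
  using assms unfolding is_walk_def by auto

lemma is_walk_replace_segment:
  assumes "is_walk V E (xs @ a # ys @ b # zs)" "is_walk V E ys'" "ys' \<noteq> []"
    and "hd ys' = a" "last ys' = b"
  shows "is_walk V E (xs @ ys' @ zs)"
proof -
  have prefix: "is_walk V E (xs @ [a])" and suffix: "is_walk V E (b # zs)"
    using assms(1) is_walk_append_iff[of "xs @ [a]" "ys @ b # zs"]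
      is_walk_append_iff[of "xs @ a # ys" "b # zs"] by auto
  have "is_walk V E (ys' @ zs)"
  proof (cases zs)
    case (Cons z zs')
    then show ?thesis
      using suffix assms(2-5) by (auto simp: is_walk_Cons_Cons is_walk_append_iff)
  qed (use assms(2) in simp)
  moreover have "xs \<noteq> [] \<Longrightarrow> is_walk V E xs \<and> E (last xs) a"
    using prefix is_walk_append_iff[of xs "[a]"] by simp
  ultimately show ?thesis
    using assms(3,4) by (cases "xs = []") (auto simp: is_walk_append_iff)
qed

lemma split_first_last_crossing:
  assumes "\<not> P (hd p)" "\<not> P (last p)" "x \<in> set p" "P x"
  obtains xs a ys b zs where "p = xs @ a # ys @ b # zs" "ys \<noteq> []"
    "\<not> P a" "P (hd ys)" "P (last ys)" "\<not> P b"
proof -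
  obtain xs1 c zs1 where p: "p = xs1 @ c # zs1" and "P c" and pre: "\<forall>y\<in>set xs1. \<not> P y"
    using split_list_first_prop[of p P] assms(3,4) by blast
  then obtain xs a where xs1: "xs1 = xs @ [a]"
    using assms(1) by (cases xs1 rule: rev_cases) auto
  obtain ys0 e zs2 where cz: "c # zs1 = ys0 @ e # zs2" and "P e" and suf: "\<forall>z\<in>set zs2. \<not> P z"
    using split_list_last_prop[of "c # zs1" P] \<open>P c\<close> by auto
  then obtain b zs where zs2: "zs2 = b # zs"
    using assms(2) p by (cases zs2) auto
  show thesis
  proof
    show "p = xs @ a # (ys0 @ [e]) @ b # zs"
      using p xs1 cz zs2 by simp
    show "P (hd (ys0 @ [e]))"
      using cz \<open>P c\<close> \<open>P e\<close> by (cases ys0) auto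
  qed (use pre suf xs1 zs2 \<open>P e\<close> in auto)
qed

lemma shortest_path_avoids_halfspace:
  assumes sp: "is_shortest_path V E u v p" and "\<not> P u" "\<not> P v"
    and f_vert: "\<And>w. w \<in> V \<Longrightarrow> f w \<in> V" and f_edge: "\<And>x y. E x y \<Longrightarrow> E (f x) (f y)"
    and f_swap: "\<And>x y. E x y \<Longrightarrow> P x \<noteq> P y \<Longrightarrow> f x = y \<and> f y = x"
    and "w \<in> set p"
  shows "\<not> P w"
proof
  assume "P w"
  have walk: "is_walk V E p" and ends: "hd p = u" "last p = v"
    and minimal: "\<And>q. is_walk V E q \<Longrightarrow> hd q = u \<Longrightarrow> last q = v \<Longrightarrow> length p \<le> length q"
    using sp unfolding is_shortest_path_def by auto
  obtain xs a ys b zs where p: "p = xs @ a # ys @ b # zs" and "ys \<noteq> []"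
    and "\<not> P a" "P (hd ys)" "P (last ys)" "\<not> P b"
    using split_first_last_crossing[of P p w] ends \<open>\<not> P u\<close> \<open>\<not> P v\<close> \<open>w \<in> set p\<close> \<open>P w\<close>
    by blast
  have "is_walk V E ([a] @ ys @ [b])"
    using walk p is_walk_infix[of V E xs "a # ys @ [b]" zs] by simp
  then have "is_walk V E ys" "E a (hd ys)" "E (last ys) b"
    using \<open>ys \<noteq> []\<close> is_walk_append_iff[of "[a]" "ys @ [b]" V E]
      is_walk_append_iff[of ys "[b]" V E] by auto
  then have "f (hd ys) = a" "f (last ys) = b"
    using f_swap \<open>\<not> P a\<close> \<open>P (hd ys)\<close> \<open>P (last ys)\<close> \<open>\<not> P b\<close> by blast+
  define q where "q = xs @ map f ys @ zs"
  have "is_walk V E (map f ys)"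
    using \<open>is_walk V E ys\<close> f_vert f_edge by (rule is_walk_map)
  then have "is_walk V E q"
    unfolding q_def using walk p \<open>ys \<noteq> []\<close> \<open>f (hd ys) = a\<close> \<open>f (last ys) = b\<close>
    by (intro is_walk_replace_segment[of V E xs a ys b zs]) (simp_all add: hd_map last_map)
  moreover have "hd q = hd p"
    using p \<open>ys \<noteq> []\<close> \<open>f (hd ys) = a\<close> by (cases xs) (simp_all add: q_def hd_map)
  moreover have "last q = last p"
    using p \<open>ys \<noteq> []\<close> \<open>f (last ys) = b\<close> by (cases "zs = []") (simp_all add: q_def last_map)
  ultimately have "length p \<le> length q"
    using minimal ends by simp
  then show False
    using p by (simp add: q_def)
qed

lemma length_flip_bit [simp]: "length (flip_bit x i) = length x"
  by (simp add: flip_bit_def)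

lemma flip_bit_flip_bit_same [simp]: "i < length x \<Longrightarrow> flip_bit (flip_bit x i) i = x"
  by (simp add: flip_bit_def)

lemma flip_bit_commute: "flip_bit (flip_bit x j) i = flip_bit (flip_bit x i) j"
  by (cases "i = j") (simp_all add: flip_bit_def list_update_swap)

lemma nth_flip_bit: "k < length x \<Longrightarrow> flip_bit x i ! k = (if k = i then \<not> x ! k else x ! k)"
  by (simp add: flip_bit_def)

lemma ccc_adj_flip_bit:
  assumes "ccc_adj d (l, x) (l', y)"
  shows "ccc_adj d (l, flip_bit x i) (l', flip_bit y i)"
proof -
  have "(x = y \<and> (l' = (l + 1) mod d \<or> l = (l' + 1) mod d)) \<or> (l = l' \<and> y = flip_bit x l)"
    using assms by (simp add: ccc_adj_def)
  then have "(flip_bit x i = flip_bit y i \<and> (l' = (l + 1) mod d \<or> l = (l' + 1) mod d))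
      \<or> (l = l' \<and> flip_bit y i = flip_bit (flip_bit x i) l)"
    using flip_bit_commute by metis
  then show ?thesis
    using assms by (simp add: ccc_adj_def ccc_verts_def)
qed

lemma ccc_adj_crossing_bit:
  assumes "ccc_adj d (l, x) (l', y)" "x ! i \<noteq> y ! i" "i < d"
  shows "(l, flip_bit x i) = (l', y) \<and> (l', flip_bit y i) = (l, x)"
proof -
  have "l' = l" "y = flip_bit x l" "length x = d"
    using assms(1,2) by (auto simp: ccc_adj_def ccc_verts_def)
  moreover from this have "l = i"
    using assms(2,3) by (auto simp: nth_flip_bit split: if_splits)
  ultimately show ?thesis
    using assms(3) by simp
qed

lemma ccc_shortest_path_keeps_bit:
  assumes sp: "is_shortest_path (ccc_verts d) (ccc_adj d) u v p"
    and "i < d" "snd u ! i = c" "snd v ! i = c" "w \<in> set p"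
  shows "snd w ! i = c"
proof -
  define f :: "nat \<times> bool list \<Rightarrow> nat \<times> bool list"
    where "f = (\<lambda>(l, x). (l, flip_bit x i))"
  have "\<And>w. w \<in> ccc_verts d \<Longrightarrow> f w \<in> ccc_verts d"
    by (auto simp: f_def ccc_verts_def)
  moreover have "\<And>x y. ccc_adj d x y \<Longrightarrow> ccc_adj d (f x) (f y)"
    by (auto simp: f_def ccc_adj_flip_bit)
  moreover have "f x = y \<and> f y = x"
    if "ccc_adj d x y" "(snd x ! i \<noteq> c) \<noteq> (snd y ! i \<noteq> c)" for x y
  proof -
    have "snd x ! i \<noteq> snd y ! i"
      using that(2) by auto
    then show ?thesis
      using ccc_adj_crossing_bit[of d "fst x" "snd x" "fst y" "snd y" i] that(1) \<open>i < d\<close>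
      by (simp add: f_def split_beta)
  qed
  ultimately show ?thesis
    using shortest_path_avoids_halfspace[OF sp, of "\<lambda>w. snd w ! i \<noteq> c" f w] assms(3-5)
    by blast
qed

theorem lemma4p1:
  fixes d d' :: nat and F :: "nat set" and a :: "bool list"
  assumes "d \<ge> 3" and "d' < d"
    and "F \<subseteq> {..<d}" and "card F = d - d'" and "length a = d"
  shows "convex_induced (ccc_verts d) (ccc_adj d)
           {(l, x). l < d \<and> x \<in> subcube d F a}"
  unfolding convex_induced_def
proof (intro conjI ballI allI impI subsetI)
  let ?W = "{(l, x). l < d \<and> x \<in> subcube d F a}"
  show "w \<in> ccc_verts d" if "w \<in> ?W" for w
    using that by (auto simp: subcube_def ccc_verts_def)
  fix u v p w
  assume "u \<in> ?W" "v \<in> ?W" and sp: "is_shortest_path (ccc_verts d) (ccc_adj d) u v p"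
    and "w \<in> set p"
  have "w \<in> ccc_verts d"
    using sp \<open>w \<in> set p\<close> by (auto simp: is_shortest_path_def is_walk_def)
  moreover have "snd w ! i = a ! i" if "i \<in> F" for i
    using ccc_shortest_path_keeps_bit[OF sp, of i "a ! i" w] \<open>u \<in> ?W\<close> \<open>v \<in> ?W\<close>
      \<open>w \<in> set p\<close> that assms(3) by (auto simp: subcube_def)
  ultimately show "w \<in> ?W"
    by (cases w) (simp add: ccc_verts_def subcube_def)
qed

end
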